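(* For $i=1,2$, let $l^i,u^i,\hbar^i$ satisfy the standing assumptions below with the same constants $C_\hbar,\underline{c},\overline{c}$, let $\overline{Y}^i\in C^1_G(0,T)$ with $l^i_T\le\hat{\mathbb{E}}[\hbar^i(T,\overline{Y}^i_T)]\le u^i_T$, and let $(Y^i,R^i)\in C^1_G(0,T)\times C^T_B$ be the solution of the backward Skorokhod problem with sublinear expectation associated to $\overline{Y}^i,\hbar^i$ and barriers $l^i,u^i$. Then for any $t\in[0,T]$, $$\begin{aligned}|(R^1_T-R^1_t)-(R^2_T-R^2_t)|&\le\sup_{s\in[t,T]}|\hat{\mathbb{E}}[\overline{Y}^1_s]-\hat{\mathbb{E}}[\overline{Y}^2_s]|+\frac{2\overline{c}}{\underline{c}}\sup_{s\in[t,T]}\hat{\mathbb{E}}[|\overline{Y}^1_s-\overline{Y}^2_s|]\\&\quad+\frac1{\underline{c}}\Big\{\sup_{s\in[t,T]}\max\big[|\overline{H}^1(s,L^1_s(\overline{Y}^2_s),\overline{Y}^2_s)-\overline{H}^2(s,L^1_s(\overline{Y}^2_s),\overline{Y}^2_s)|,\ |\overline{H}^1(s,U^1_s(\overline{Y}^2_s),\overline{Y}^2_s)-\overline{H}^2(s,U^1_s(\overline{Y}^2_s),\overline{Y}^2_s)|\big]\\&\qquad\qquad+\sup_{s\in[t,T]}\max(|l^1_s-l^2_s|,|u^1_s-u^2_s|)\Big\}.\end{aligned}$$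
   Context: Setting: $\hat{\mathbb{E}}$ is the $G$-expectation on $\Omega_T=\{\omega\in C([0,T];\mathbb{R}^d):\omega_0=0\}$; $L^1_G(\Omega_t)$ the completion of bounded Lipschitz cylinder functionals of the canonical process up to $t$ under $\hat{\mathbb{E}}|\cdot|$; $C^1_G(0,T)$ the processes $Y$ with $Y_v\in L^1_G(\Omega_v)$ and $v\mapsto Y_v$ continuous in $\hat{\mathbb{E}}|\cdot|$; $C^T_B$ the deterministic continuous functions on $[0,T]$ of bounded variation starting at $0$. Standing assumptions on $(l,u,\hbar)$: $l,u$ bounded continuous on $[0,T]$ with $\inf_t(u_t-l_t)>0$; $\hbar:[0,T]\times\Omega_T\times\mathbb{R}\to\mathbb{R}$, $(t,y)\mapsto\hbar(t,y)$ uniformly continuous uniformly in $\omega$, strictly increasing in $y$, $\hbar(t,y)\in L^1_G(\Omega_T)$, $\hat{\mathbb{E}}[\lim_{y\downarrow-\infty}\hbar(t,y)]<\inf_sl_s<\sup_su_s<\hat{\mathbb{E}}[\lim_{y\uparrow\infty}\hbar(t,y)]$, $|\hbar(t,y)|\le C_\hbar(1+|y|)$, $\underline{c}|y-y'|\le|\hbar(t,y)-\hbar(t,y')|\le\overline{c}|y-y'|$. For $X\in L^1_G(\Omega_s)$: $\overline{H}^i(s,x,X)=\hat{\mathbb{E}}[\hbar^i(s,x+X-\hat{\mathbb{E}}[X])]$, $L^i_s(X)=(\overline{H}^i)^{-1}(s,\cdot,X)(l^i_s)$, $U^i_s(X)=(\overline{H}^i)^{-1}(s,\cdot,X)(u^i_s)$.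 $(Y,R)\in C^1_G(0,T)\times C^T_B$ solves the backward Skorokhod problem with sublinear expectation associated to $\overline{Y},\hbar,l,u$ if $Y_t=\overline{Y}_t+R_T-R_t$, $l_t\le\hat{\mathbb{E}}[\hbar(t,Y_t)]\le u_t$ for all $t$, and $\int_s^t(\hat{\mathbb{E}}[\hbar(v,Y_v)]-l_v)dR_v\le0$, $\int_s^t(\hat{\mathbb{E}}[\hbar(v,Y_v)]-u_v)dR_v\le0$ for $0\le s\le t\le T$ (such a solution exists and is unique). *)

theory Defs
  imports "HOL-Analysis.Analysis" "HOL-Library.Extended_Real"
begin

section \<open>Sublinear expectation (abstract rendering of the G-expectation)\<close>

definition sublinear_expectation :: "('w \<Rightarrow> real) set \<Rightarrow> (('w \<Rightarrow> real) \<Rightarrow> real) \<Rightarrow> bool" where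
  "sublinear_expectation HH E \<longleftrightarrow>
     (\<forall>c::real. (\<lambda>_. c) \<in> HH) \<and>
     (\<forall>X\<in>HH. \<forall>Y\<in>HH. (\<lambda>w. X w + Y w) \<in> HH) \<and>
     (\<forall>X\<in>HH. \<forall>a::real. (\<lambda>w. a * X w) \<in> HH) \<and>
     (\<forall>X\<in>HH. (\<lambda>w. \<bar>X w\<bar>) \<in> HH) \<and>
     (\<forall>X\<in>HH. \<forall>Y\<in>HH. (\<forall>w. X w \<le> Y w) \<longrightarrow> E X \<le> E Y) \<and>
     (\<forall>c::real. E (\<lambda>_. c) = c) \<and>
     (\<forall>X\<in>HH. \<forall>Y\<in>HH. E (\<lambda>w. X w + Y w) \<le> E X + E Y) \<and>
     (\<forall>X\<in>HH. \<forall>a::real. a \<ge> 0 \<longrightarrow> E (\<lambda>w. a * X w) = a * E X)"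

definition C1G :: "('w \<Rightarrow> real) set \<Rightarrow> (('w \<Rightarrow> real) \<Rightarrow> real) \<Rightarrow> real \<Rightarrow> (real \<Rightarrow> 'w \<Rightarrow> real) \<Rightarrow> bool" where
  "C1G HH E T Y \<longleftrightarrow>
     (\<forall>v\<in>{0..T}. Y v \<in> HH) \<and>
     (\<forall>v\<in>{0..T}. \<forall>\<epsilon>>0. \<exists>\<delta>>0. \<forall>v'\<in>{0..T}. \<bar>v' - v\<bar> < \<delta> \<longrightarrow>
         E (\<lambda>w. \<bar>Y v' w - Y v w\<bar>) < \<epsilon>)"

definition is_partition :: "real \<Rightarrow> real \<Rightarrow> nat \<Rightarrow> (nat \<Rightarrow> real) \<Rightarrow> bool" where
  "is_partition a b n p \<longleftrightarrow> p 0 = a \<and> p n = b \<and> (\<forall>i<n. p i < p (Suc i))"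

definition bounded_variation_on :: "real \<Rightarrow> real \<Rightarrow> (real \<Rightarrow> real) \<Rightarrow> bool" where
  "bounded_variation_on a b g \<longleftrightarrow>
     (\<exists>M. \<forall>n p. is_partition a b n p \<longrightarrow> (\<Sum>i<n. \<bar>g (p (Suc i)) - g (p i)\<bar>) \<le> M)"

definition CTB :: "real \<Rightarrow> (real \<Rightarrow> real) \<Rightarrow> bool" where
  "CTB T R \<longleftrightarrow> continuous_on {0..T} R \<and> bounded_variation_on 0 T R \<and> R 0 = 0"

definition has_RS_integral :: "(real \<Rightarrow> real) \<Rightarrow> (real \<Rightarrow> real) \<Rightarrow> real \<Rightarrow> real \<Rightarrow> real \<Rightarrow> bool" where
  "has_RS_integral f g a b I \<longleftrightarrow>
     (\<forall>\<epsilon>>0. \<exists>\<delta>>0. \<forall>n p \<xi>. is_partition a b n p \<and>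
        (\<forall>i<n. p (Suc i) - p i < \<delta> \<and> p i \<le> \<xi> i \<and> \<xi> i \<le> p (Suc i)) \<longrightarrow>
        \<bar>(\<Sum>i<n. f (\<xi> i) * (g (p (Suc i)) - g (p i))) - I\<bar> < \<epsilon>)"

text \<open>hbar :: time \<Rightarrow> sample point \<Rightarrow> y \<Rightarrow> real.\<close>

definition Hbar :: "(('w \<Rightarrow> real) \<Rightarrow> real) \<Rightarrow> (real \<Rightarrow> 'w \<Rightarrow> real \<Rightarrow> real) \<Rightarrow> real \<Rightarrow> real \<Rightarrow> ('w \<Rightarrow> real) \<Rightarrow> real" where
  "Hbar E h s x X = E (\<lambda>w. h s w (x + X w - E X))"

text \<open>L_s(X) = (Hbar(s,.,X))^{-1}(l_s), U_s(X) = (Hbar(s,.,X))^{-1}(u_s).\<close>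
definition Linv :: "(('w \<Rightarrow> real) \<Rightarrow> real) \<Rightarrow> (real \<Rightarrow> 'w \<Rightarrow> real \<Rightarrow> real) \<Rightarrow> (real \<Rightarrow> real) \<Rightarrow> real \<Rightarrow> ('w \<Rightarrow> real) \<Rightarrow> real" where
  "Linv E h l s X = (THE x. Hbar E h s x X = l s)"

definition standing_assms ::
  "('w \<Rightarrow> real) set \<Rightarrow> (('w \<Rightarrow> real) \<Rightarrow> real) \<Rightarrow> real \<Rightarrow> real \<Rightarrow> real \<Rightarrow> real \<Rightarrow>
   (real \<Rightarrow> real) \<Rightarrow> (real \<Rightarrow> real) \<Rightarrow> (real \<Rightarrow> 'w \<Rightarrow> real \<Rightarrow> real) \<Rightarrow> bool" where
  "standing_assms HH E T Ch cl cu l u h \<longleftrightarrow>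
     0 < cl \<and>
     continuous_on {0..T} l \<and> bounded (l ` {0..T}) \<and>
     continuous_on {0..T} u \<and> bounded (u ` {0..T}) \<and>
     (\<exists>\<delta>>0. \<forall>t\<in>{0..T}. u t - l t \<ge> \<delta>) \<and>
     (\<forall>\<epsilon>>0. \<exists>\<delta>>0. \<forall>w. \<forall>t\<in>{0..T}. \<forall>t'\<in>{0..T}. \<forall>y y'.
         \<bar>t - t'\<bar> < \<delta> \<and> \<bar>y - y'\<bar> < \<delta> \<longrightarrow> \<bar>h t w y - h t' w y'\<bar> < \<epsilon>) \<and>
     (\<forall>t\<in>{0..T}. \<forall>w. strict_mono (h t w)) \<and>
     (\<forall>t\<in>{0..T}. \<forall>y. (\<lambda>w. h t w y) \<in> HH) \<and>
     (\<forall>t\<in>{0..T}. \<forall>X\<in>HH. (\<lambda>w. h t w (X w)) \<in> HH) \<and>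
     (\<forall>t\<in>{0..T}. \<forall>w y. \<bar>h t w y\<bar> \<le> Ch * (1 + \<bar>y\<bar>)) \<and>
     (\<forall>t\<in>{0..T}. \<forall>w y y'. cl * \<bar>y - y'\<bar> \<le> \<bar>h t w y - h t w y'\<bar> \<and>
                           \<bar>h t w y - h t w y'\<bar> \<le> cu * \<bar>y - y'\<bar>)"

definition BSP_solution ::
  "('w \<Rightarrow> real) set \<Rightarrow> (('w \<Rightarrow> real) \<Rightarrow> real) \<Rightarrow> real \<Rightarrow> (real \<Rightarrow> 'w \<Rightarrow> real) \<Rightarrow>
   (real \<Rightarrow> 'w \<Rightarrow> real \<Rightarrow> real) \<Rightarrow> (real \<Rightarrow> real) \<Rightarrow> (real \<Rightarrow> real) \<Rightarrow>
   (real \<Rightarrow> 'w \<Rightarrow> real) \<Rightarrow> (real \<Rightarrow> real) \<Rightarrow> bool" where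
  "BSP_solution HH E T Ybar h l u Y R \<longleftrightarrow>
     C1G HH E T Y \<and> CTB T R \<and>
     (\<forall>t\<in>{0..T}. \<forall>w. Y t w = Ybar t w + R T - R t) \<and>
     (\<forall>t\<in>{0..T}. l t \<le> E (\<lambda>w. h t w (Y t w)) \<and> E (\<lambda>w. h t w (Y t w)) \<le> u t) \<and>
     (\<forall>s t. 0 \<le> s \<and> s \<le> t \<and> t \<le> T \<longrightarrow>
        (\<exists>I. has_RS_integral (\<lambda>v. E (\<lambda>w. h v w (Y v w)) - l v) R s t I \<and> I \<le> 0) \<and>
        (\<exists>I. has_RS_integral (\<lambda>v. E (\<lambda>w. h v w (Y v w)) - u v) R s t I \<and> I \<le> 0))"

end

theory Submission
  imports Defs
begin

text \<open>Write \<open>K\<^sup>i v = R\<^sup>i T - R\<^sup>i v\<close>. Since \<open>Y\<^sup>i v = Ybar\<^sup>i v + K\<^sup>i v\<close>, the constraint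
  \<open>l\<^sup>i \<le> E h\<^sup>i(v, Y\<^sup>i v) \<le> u\<^sup>i\<close> says that \<open>K\<^sup>i v\<close> lies between the centered barriers
  \<open>L\<^sup>i v (Ybar\<^sup>i v) - E (Ybar\<^sup>i v)\<close> and \<open>U\<^sup>i v (Ybar\<^sup>i v) - E (Ybar\<^sup>i v)\<close>, and the
  Stieltjes conditions say that \<open>R\<^sup>i\<close> cannot increase where the lower constraint is slack and
  cannot decrease where the upper one is. Let \<open>m\<close> bound the distance between the corresponding
  centered barriers of the two problems on \<open>[t,T]\<close>. Wherever \<open>K\<^sup>1 - K\<^sup>2 > m\<close>, problem 1 is
  strictly above its lower barrier and problem 2 strictly below its upper barrier, so \<open>R\<^sup>1\<close>
  cannot increase and \<open>R\<^sup>2\<close> cannot decrease there. Going backwards from \<open>T\<close>, where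
  \<open>K\<^sup>1 - K\<^sup>2 = 0\<close>, the difference therefore never exceeds \<open>m\<close>, and by symmetry
  \<open>|K\<^sup>1 t - K\<^sup>2 t| \<le> m\<close>. Finally \<open>m\<close> is estimated by the Lipschitz dependence of the inverse
  \<open>L\<close> of \<open>Hbar\<close> on the random variable (constant \<open>2 cu / cl\<close>) and on the data \<open>h, l\<close>
  (constant \<open>1 / cl\<close>).\<close>

section \<open>Partitions and variation sums\<close>

lemma is_partition_mono:
  assumes "is_partition a b n P" "i \<le> j" "j \<le> n"
  shows "P i \<le> P j"
  using assms(2,3)
proof (induction j)
  case (Suc j)
  show ?case
  proof (cases "i = Suc j")
    case False
    then have "P i \<le> P j" using Suc by simp
    also have "P j < P (Suc j)" using assms(1) Suc.prems unfolding is_partition_def by simp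
    finally show ?thesis by simp
  qed simp
qed simp

lemma is_partition_mem:
  assumes "is_partition a b n P" "i \<le> n"
  shows "P i \<in> {a..b}"
  using is_partition_mono[OF assms(1), of 0 i] is_partition_mono[OF assms(1), of i n] assms
  unfolding is_partition_def by auto

lemma is_partition_telescope:
  fixes R :: "real \<Rightarrow> 'a::ab_group_add"
  assumes "is_partition a b n P"
  shows "(\<Sum>i<n. R (P (Suc i)) - R (P i)) = R b - R a"
  using sum_lessThan_telescope[of "\<lambda>i. R (P i)" n] assms unfolding is_partition_def by simp

lemma is_partition_arith_grid:
  fixes a h :: real
  assumes "0 < h"
  shows "is_partition (a + real m * h) (a + real (m + n) * h) n (\<lambda>j. a + real (m + j) * h)"
  using assms unfolding is_partition_def by (simp add: algebra_simps)

definition variation_sum :: "(real \<Rightarrow> real) \<Rightarrow> nat \<Rightarrow> (nat \<Rightarrow> real) \<Rightarrow> real" where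
  "variation_sum R n P = (\<Sum>i<n. \<bar>R (P (Suc i)) - R (P i)\<bar>)"

lemma variation_sum_nonneg: "0 \<le> variation_sum R n P"
  unfolding variation_sum_def by (simp add: sum_nonneg)

lemma bounded_variation_on_iff:
  "bounded_variation_on a b R \<longleftrightarrow> (\<exists>V. \<forall>n P. is_partition a b n P \<longrightarrow> variation_sum R n P \<le> V)"
  unfolding bounded_variation_on_def variation_sum_def ..

lemma is_partition_extend_left:
  assumes "is_partition p q n P" "a \<le> p"
  obtains n' P' where "is_partition a q n' P'" "variation_sum R n P \<le> variation_sum R n' P'"
proof (cases "a = p")
  case False
  define P' where "P' k = (if k = 0 then a else P (k - 1))" for k
  have "is_partition a q (Suc n) P'"
    using assms False unfolding is_partition_def P'_def by (auto simp: less_Suc_eq_0_disj)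
  moreover have "variation_sum R (Suc n) P' = \<bar>R p - R a\<bar> + variation_sum R n P"
    using assms unfolding is_partition_def variation_sum_def P'_def
    by (simp add: sum.lessThan_Suc_shift del: sum.lessThan_Suc)
  ultimately show ?thesis using that by fastforce
qed (use assms that in blast)

lemma is_partition_extend_right:
  assumes "is_partition p q n P" "q \<le> b"
  obtains n' P' where "is_partition p b n' P'" "variation_sum R n P \<le> variation_sum R n' P'"
proof (cases "q = b")
  case False
  define P' where "P' k = (if k \<le> n then P k else b)" for k
  have "is_partition p b (Suc n) P'"
    using assms False unfolding is_partition_def P'_def by (auto simp: less_Suc_eq)
  moreover have "variation_sum R (Suc n) P' = variation_sum R n P + \<bar>R b - R q\<bar>"
    using assms unfolding is_partition_def variation_sum_def P'_def by simp
  ultimately show ?thesis using that by fastforce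
qed (use assms that in blast)

lemma bounded_variation_on_subinterval:
  assumes "bounded_variation_on a b R" "a \<le> p" "q \<le> b"
  shows "bounded_variation_on p q R"
proof -
  obtain V where V: "\<And>n P. is_partition a b n P \<Longrightarrow> variation_sum R n P \<le> V"
    using assms(1) unfolding bounded_variation_on_iff by blast
  have "variation_sum R n P \<le> V" if P: "is_partition p q n P" for n P
  proof -
    obtain n' P' where "is_partition a q n' P'" "variation_sum R n P \<le> variation_sum R n' P'"
      using is_partition_extend_left[OF P assms(2)] .
    moreover obtain n'' P'' where "is_partition a b n'' P''"
      "variation_sum R n' P' \<le> variation_sum R n'' P''"
      using is_partition_extend_right[OF calculation(1) assms(3)] .
    ultimately show ?thesis using V by fastforce
  qed
  then show ?thesis unfolding bounded_variation_on_iff by blast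
qed

lemma bounded_variation_on_uminus:
  "bounded_variation_on a b R \<Longrightarrow> bounded_variation_on a b (\<lambda>x. - R x)"
  unfolding bounded_variation_on_iff variation_sum_def by (simp add: abs_minus_commute)

lemma variation_sum_blocks:
  "(\<Sum>i<N. variation_sum R M (\<lambda>j. Q (i * M + j))) = variation_sum R (N * M) Q"
proof -
  have "variation_sum R M (\<lambda>j. Q (i * M + j)) = (\<Sum>k\<in>{i * M..<i * M + M}. \<bar>R (Q (Suc k)) - R (Q k)\<bar>)" for i
    using sum.shift_bounds_nat_ivl[of "\<lambda>k. \<bar>R (Q (Suc k)) - R (Q k)\<bar>" 0 "i * M" M]
    unfolding variation_sum_def by (simp add: atLeast0LessThan add.commute)
  then show ?thesis
    unfolding variation_sum_def[of R "N * M"] by (simp add: sum.nat_group)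
qed

section \<open>Stieltjes integrals against a positive integrand\<close>

lemma has_RS_integral_uminus:
  "has_RS_integral f R a b I \<Longrightarrow> has_RS_integral (\<lambda>v. - f v) (\<lambda>v. - R v) a b I"
  unfolding has_RS_integral_def by (simp add: algebra_simps)

lemma increment_le_left_RS_sum:
  assumes P: "is_partition a b n P" and osc: "\<forall>x\<in>{a..b}. \<bar>f x - f a\<bar> \<le> \<epsilon>"
  shows "f a * (R b - R a) \<le> (\<Sum>i<n. f (P i) * (R (P (Suc i)) - R (P i))) + \<epsilon> * variation_sum R n P"
proof -
  have "f a * (R (P (Suc i)) - R (P i)) \<le> f (P i) * (R (P (Suc i)) - R (P i)) + \<epsilon> * \<bar>R (P (Suc i)) - R (P i)\<bar>"
    if "i < n" for i
  proof -
    have "\<bar>f a - f (P i)\<bar> \<le> \<epsilon>"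
      using osc is_partition_mem[OF P, of i] that by (auto simp: abs_minus_commute)
    then have "(f a - f (P i)) * (R (P (Suc i)) - R (P i)) \<le> \<epsilon> * \<bar>R (P (Suc i)) - R (P i)\<bar>"
      by (metis abs_ge_self abs_ge_zero abs_mult mult_right_mono order_trans)
    then show ?thesis by (simp add: algebra_simps)
  qed
  then have "(\<Sum>i<n. f a * (R (P (Suc i)) - R (P i)))
      \<le> (\<Sum>i<n. f (P i) * (R (P (Suc i)) - R (P i)) + \<epsilon> * \<bar>R (P (Suc i)) - R (P i)\<bar>)"
    by (intro sum_mono) simp
  then show ?thesis
    by (simp add: is_partition_telescope[OF P] sum.distrib variation_sum_def
        flip: sum_distrib_left)
qed

lemma has_RS_integral_nonpos_increment_le:
  assumes RS: "has_RS_integral f R a b I" "I \<le> 0"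
    and c: "0 < c" "c \<le> f a" and osc: "\<forall>x\<in>{a..b}. \<bar>f x - f a\<bar> \<le> \<epsilon>" and "0 < \<eta>"
  shows "\<exists>\<delta>>0. \<forall>n P. is_partition a b n P \<and> (\<forall>i<n. P (Suc i) - P i < \<delta>) \<longrightarrow>
           c * (R b - R a) \<le> \<eta> + \<epsilon> * variation_sum R n P"
proof -
  obtain \<delta> where "0 < \<delta>" and \<delta>: "\<And>n P \<xi>. is_partition a b n P \<Longrightarrow>
      (\<forall>i<n. P (Suc i) - P i < \<delta> \<and> P i \<le> \<xi> i \<and> \<xi> i \<le> P (Suc i)) \<Longrightarrow>
      \<bar>(\<Sum>i<n. f (\<xi> i) * (R (P (Suc i)) - R (P i))) - I\<bar> < \<eta>"
    using RS(1) \<open>0 < \<eta>\<close> unfolding has_RS_integral_def by meson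
  have "c * (R b - R a) \<le> \<eta> + \<epsilon> * variation_sum R n P"
    if P: "is_partition a b n P" and mesh: "\<forall>i<n. P (Suc i) - P i < \<delta>" for n P
  proof -
    have "0 \<le> \<epsilon>" using osc is_partition_mem[OF P, of 0] by auto
    have "\<bar>(\<Sum>i<n. f (P i) * (R (P (Suc i)) - R (P i))) - I\<bar> < \<eta>"
      using \<delta>[OF P] mesh P by (simp add: is_partition_def less_imp_le)
    then have "f a * (R b - R a) \<le> \<eta> + \<epsilon> * variation_sum R n P"
      using increment_le_left_RS_sum[OF P osc, of R] RS(2) by linarith
    moreover have "0 \<le> \<eta> + \<epsilon> * variation_sum R n P"
      using \<open>0 < \<eta>\<close> \<open>0 \<le> \<epsilon>\<close> variation_sum_nonneg[of R n P] by simp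
    moreover have "c * (R b - R a) \<le> max 0 (f a * (R b - R a))"
      using c by (cases "R b - R a \<le> 0") (auto simp: mult_nonneg_nonpos mult_right_mono)
    ultimately show ?thesis by linarith
  qed
  then show ?thesis using \<open>0 < \<delta>\<close> by blast
qed

lemma increment_le_on_fine_grid:
  fixes p h0 c \<eta> \<epsilon> :: real and N :: nat
  assumes "0 < h0"
    and piece: "\<And>i. i < N \<Longrightarrow> \<exists>\<delta>>0. \<forall>n P.
       is_partition (p + real i * h0) (p + real (Suc i) * h0) n P \<and> (\<forall>j<n. P (Suc j) - P j < \<delta>) \<longrightarrow>
       c * (R (p + real (Suc i) * h0) - R (p + real i * h0)) \<le> \<eta> + \<epsilon> * variation_sum R n P"
  shows "\<exists>n Q. is_partition p (p + real N * h0) n Q \<and>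
           c * (R (p + real N * h0) - R p) \<le> real N * \<eta> + \<epsilon> * variation_sum R n Q"
proof -
  obtain \<delta> where \<delta>: "\<And>i. i < N \<Longrightarrow> 0 < \<delta> i \<and> (\<forall>n P.
       is_partition (p + real i * h0) (p + real (Suc i) * h0) n P \<and> (\<forall>j<n. P (Suc j) - P j < \<delta> i) \<longrightarrow>
       c * (R (p + real (Suc i) * h0) - R (p + real i * h0)) \<le> \<eta> + \<epsilon> * variation_sum R n P)"
    using piece by metis
  define \<delta>m where "\<delta>m = Min (insert 1 (\<delta> ` {..<N}))"
  have "0 < \<delta>m" unfolding \<delta>m_def using \<delta> by (subst Min_gr_iff) auto
  have \<delta>m_le: "\<delta>m \<le> \<delta> i" if "i < N" for i unfolding \<delta>m_def using that by (intro Min_le) auto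
  \<comment> \<open>One grid of step \<open>h0 / M\<close>, finer than every \<open>\<delta> i\<close>, refines all pieces at once, so that
    the variation sums over the pieces add up to a single variation sum over \<open>[p, p + N h0]\<close>.\<close>
  obtain M :: nat where M: "h0 / \<delta>m < M" using reals_Archimedean2 by blast
  then have "0 < M" using \<open>0 < h0\<close> \<open>0 < \<delta>m\<close> by (metis divide_pos_pos of_nat_0_less_iff order.strict_trans)
  define h where "h = h0 / M"
  have "0 < h" "h < \<delta>m"
    using \<open>0 < h0\<close> \<open>0 < M\<close> \<open>0 < \<delta>m\<close> M by (auto simp: h_def field_simps)
  define Q where "Q k = p + real k * h" for k
  have grid: "p + real (i * M) * h = p + real i * h0" for i
    using \<open>0 < M\<close> by (simp add: h_def)
  define W where "W i = variation_sum R M (\<lambda>j. Q (i * M + j))" for i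
  have "c * (R (p + real (Suc i) * h0) - R (p + real i * h0)) \<le> \<eta> + \<epsilon> * W i" if "i < N" for i
  proof -
    have "i * M + M = Suc i * M" by simp
    then have "is_partition (p + real i * h0) (p + real (Suc i) * h0) M (\<lambda>j. Q (i * M + j))"
      using is_partition_arith_grid[OF \<open>0 < h\<close>, of p "i * M" M] by (simp only: grid Q_def)
    moreover have "Q (i * M + Suc j) - Q (i * M + j) < \<delta> i" for j
      using \<open>h < \<delta>m\<close> \<delta>m_le[OF that] by (simp add: Q_def algebra_simps)
    ultimately show ?thesis using \<delta>[OF that] unfolding W_def by simp
  qed
  then have "(\<Sum>i<N. c * (R (p + real (Suc i) * h0) - R (p + real i * h0))) \<le> (\<Sum>i<N. \<eta> + \<epsilon> * W i)"
    by (intro sum_mono) simp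
  moreover have "(\<Sum>i<N. c * (R (p + real (Suc i) * h0) - R (p + real i * h0))) = c * (R (p + real N * h0) - R p)"
    using sum_lessThan_telescope[of "\<lambda>i. R (p + real i * h0)" N] by (simp flip: sum_distrib_left)
  moreover have "(\<Sum>i<N. \<eta> + \<epsilon> * W i) = real N * \<eta> + \<epsilon> * variation_sum R (N * M) Q"
    by (simp add: W_def sum.distrib variation_sum_blocks flip: sum_distrib_left)
  moreover have "is_partition p (p + real N * h0) (N * M) Q"
    using is_partition_arith_grid[OF \<open>0 < h\<close>, of p 0 "N * M"]
    by (simp only: grid add_0 of_nat_0 mult_zero_left add_0_right Q_def[abs_def])
  ultimately show ?thesis by auto
qed

lemma RS_integrals_nonpos_increment_le:
  assumes "p < q" and f: "continuous_on {p..q} f" and c: "0 < c" "\<forall>v\<in>{p..q}. c \<le> f v"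
    and RS: "\<forall>s s'. p \<le> s \<and> s < s' \<and> s' \<le> q \<longrightarrow> (\<exists>I. has_RS_integral f R s s' I \<and> I \<le> 0)"
    and "0 < \<epsilon>" "0 < \<eta>"
  shows "\<exists>n Q. is_partition p q n Q \<and> c * (R q - R p) \<le> \<eta> + \<epsilon> * variation_sum R n Q"
proof -
  obtain d0 where "0 < d0" and d0: "\<forall>x\<in>{p..q}. \<forall>x'\<in>{p..q}. dist x' x < d0 \<longrightarrow> dist (f x') (f x) < \<epsilon>"
    using compact_uniformly_continuous[OF f compact_Icc] \<open>0 < \<epsilon>\<close>
    unfolding uniformly_continuous_on_def by metis
  obtain N :: nat where N: "(q - p) / d0 < N" using reals_Archimedean2 by blast
  then have "0 < N"
    using \<open>p < q\<close> \<open>0 < d0\<close> by (metis diff_gt_0_iff_gt divide_pos_pos of_nat_0_less_iff order.strict_trans)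
  define h0 where "h0 = (q - p) / N"
  have "0 < h0" "h0 < d0" and pN: "p + real N * h0 = q"
    using \<open>p < q\<close> \<open>0 < N\<close> \<open>0 < d0\<close> N by (auto simp: h0_def field_simps)
  have "\<exists>n Q. is_partition p (p + real N * h0) n Q \<and>
           c * (R (p + real N * h0) - R p) \<le> real N * (\<eta> / N) + \<epsilon> * variation_sum R n Q"
  proof (rule increment_le_on_fine_grid[OF \<open>0 < h0\<close>])
    fix i assume "i < N"
    define a where "a = p + real i * h0"
    have "p \<le> a" "a < a + h0" "a + h0 \<le> q"
      using \<open>0 < h0\<close> \<open>i < N\<close> pN mult_right_mono[of "real (Suc i)" N h0] by (auto simp: a_def algebra_simps)
    then obtain I where I: "has_RS_integral f R a (a + h0) I" "I \<le> 0" using RS by blast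
    have "\<forall>x\<in>{a..a + h0}. \<bar>f x - f a\<bar> \<le> \<epsilon>"
      using d0 \<open>h0 < d0\<close> \<open>p \<le> a\<close> \<open>a + h0 \<le> q\<close> by (auto simp: dist_real_def less_imp_le)
    moreover have "c \<le> f a" using c \<open>p \<le> a\<close> \<open>a < a + h0\<close> \<open>a + h0 \<le> q\<close> by auto
    moreover have "p + real i * h0 = a" "p + real (Suc i) * h0 = a + h0"
      by (simp_all add: a_def algebra_simps)
    moreover have "0 < \<eta> / N" using \<open>0 < \<eta>\<close> \<open>0 < N\<close> by simp
    ultimately show "\<exists>\<delta>>0. \<forall>n P. is_partition (p + real i * h0) (p + real (Suc i) * h0) n P \<and>
       (\<forall>j<n. P (Suc j) - P j < \<delta>) \<longrightarrow>
       c * (R (p + real (Suc i) * h0) - R (p + real i * h0)) \<le> \<eta> / N + \<epsilon> * variation_sum R n P"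
      using has_RS_integral_nonpos_increment_le[OF I \<open>0 < c\<close>] by presburger
  qed
  then show ?thesis unfolding pN using \<open>0 < N\<close> by simp
qed

lemma RS_integrals_nonpos_imp_le:
  assumes "p < q" and f: "continuous_on {p..q} f" "\<forall>v\<in>{p..q}. 0 < f v"
    and BV: "bounded_variation_on p q R"
    and RS: "\<forall>s s'. p \<le> s \<and> s < s' \<and> s' \<le> q \<longrightarrow> (\<exists>I. has_RS_integral f R s s' I \<and> I \<le> 0)"
  shows "R q \<le> R p"
proof (rule field_le_epsilon)
  fix e :: real assume "0 < e"
  obtain x0 where "x0 \<in> {p..q}" and x0: "\<forall>v\<in>{p..q}. f x0 \<le> f v"
    using continuous_attains_inf[OF compact_Icc _ f(1)] \<open>p < q\<close> by auto
  then have "0 < f x0" using f(2) by blast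
  obtain V where V: "\<And>n P. is_partition p q n P \<Longrightarrow> variation_sum R n P \<le> V"
    using BV unfolding bounded_variation_on_iff by blast
  define \<epsilon> where "\<epsilon> = e * f x0 / (2 * (\<bar>V\<bar> + 1))"
  have "0 < \<epsilon>" "0 < e * f x0 / 2" using \<open>0 < e\<close> \<open>0 < f x0\<close> by (simp_all add: \<epsilon>_def)
  then obtain n Q where "is_partition p q n Q"
    and bound: "f x0 * (R q - R p) \<le> e * f x0 / 2 + \<epsilon> * variation_sum R n Q"
    using RS_integrals_nonpos_increment_le[OF \<open>p < q\<close> f(1) \<open>0 < f x0\<close> x0 RS] by blast
  have "\<epsilon> * variation_sum R n Q \<le> \<epsilon> * (\<bar>V\<bar> + 1)"
    using V[OF \<open>is_partition p q n Q\<close>] \<open>0 < \<epsilon>\<close> by (intro mult_left_mono) auto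
  also have "\<dots> = e * f x0 / 2"
    using abs_ge_zero[of V] by (simp add: \<epsilon>_def field_simps)
  finally have "f x0 * (R q - R p) \<le> f x0 * e"
    using bound by (simp add: algebra_simps)
  then show "R q \<le> R p + e" using \<open>0 < f x0\<close> by simp
qed

lemma RS_integrals_nonpos_imp_le_within:
  assumes "a \<le> p" "p < q" "q \<le> b" and f: "continuous_on {a..b} f" "\<forall>v\<in>{p..q}. 0 < f v"
    and BV: "bounded_variation_on a b R"
    and RS: "\<forall>s s'. a \<le> s \<and> s < s' \<and> s' \<le> b \<longrightarrow> (\<exists>I. has_RS_integral f R s s' I \<and> I \<le> 0)"
  shows "R q \<le> R p"
  using assms by (intro RS_integrals_nonpos_imp_le[of p q f R])
    (auto intro: continuous_on_subset bounded_variation_on_subinterval)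

lemma RS_sign_conditions_imp_monotone:
  fixes R1 R2 f1 f2 :: "real \<Rightarrow> real"
  assumes "t < q" "q \<le> T"
    and BV: "bounded_variation_on t T R1" "bounded_variation_on t T R2"
    and f: "continuous_on {t..T} f1" "continuous_on {t..T} f2"
    and RS1: "\<forall>s s'. t \<le> s \<and> s < s' \<and> s' \<le> T \<longrightarrow> (\<exists>I. has_RS_integral f1 R1 s s' I \<and> I \<le> 0)"
    and RS2: "\<forall>s s'. t \<le> s \<and> s < s' \<and> s' \<le> T \<longrightarrow> (\<exists>I. has_RS_integral f2 R2 s s' I \<and> I \<le> 0)"
    and sign: "\<forall>v\<in>{t..q}. 0 < f1 v \<and> f2 v < 0"
  shows "R1 q \<le> R1 t" "R2 t \<le> R2 q"
proof -
  show "R1 q \<le> R1 t"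
    by (rule RS_integrals_nonpos_imp_le_within[OF order_refl \<open>t < q\<close> \<open>q \<le> T\<close> f(1) _ BV(1) RS1])
      (use sign in auto)
  have "\<forall>s s'. t \<le> s \<and> s < s' \<and> s' \<le> T \<longrightarrow>
      (\<exists>I. has_RS_integral (\<lambda>v. - f2 v) (\<lambda>v. - R2 v) s s' I \<and> I \<le> 0)"
    using RS2 has_RS_integral_uminus by blast
  from RS_integrals_nonpos_imp_le_within[OF order_refl \<open>t < q\<close> \<open>q \<le> T\<close> _ _
      bounded_variation_on_uminus[OF BV(2)] this]
  show "R2 t \<le> R2 q" using sign f(2) by (auto intro: continuous_intros)
qed

lemma tail_increment_diff_le:
  fixes R1 R2 f1 f2 :: "real \<Rightarrow> real"
  assumes "t \<le> T" "0 \<le> m"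
    and R1: "continuous_on {t..T} R1" "bounded_variation_on t T R1"
    and R2: "continuous_on {t..T} R2" "bounded_variation_on t T R2"
    and f: "continuous_on {t..T} f1" "continuous_on {t..T} f2"
    and RS1: "\<forall>s s'. t \<le> s \<and> s < s' \<and> s' \<le> T \<longrightarrow> (\<exists>I. has_RS_integral f1 R1 s s' I \<and> I \<le> 0)"
    and RS2: "\<forall>s s'. t \<le> s \<and> s < s' \<and> s' \<le> T \<longrightarrow> (\<exists>I. has_RS_integral f2 R2 s s' I \<and> I \<le> 0)"
    and sign: "\<forall>v\<in>{t..T}. m < (R1 T - R1 v) - (R2 T - R2 v) \<longrightarrow> 0 < f1 v \<and> f2 v < 0"
  shows "(R1 T - R1 t) - (R2 T - R2 t) \<le> m"
proof (rule ccontr)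
  define D where "D v = (R1 T - R1 v) - (R2 T - R2 v)" for v
  assume "\<not> ?thesis"
  then have "m < D t" by (simp add: D_def)
  have "continuous_on {t..T} D"
    unfolding D_def by (intro continuous_intros R1(1) R2(1))
  \<comment> \<open>\<open>\<tau>\<close> is the first time after \<open>t\<close> with \<open>D \<le> m\<close>. On \<open>[t,\<tau>)\<close> the sign conditions make \<open>R1\<close>
    non-increasing and \<open>R2\<close> non-decreasing, so \<open>D t \<le> D q\<close> there, and \<open>D t \<le> D \<tau>\<close> by continuity.\<close>
  define S where "S = {v \<in> {t..T}. D v \<le> m}"
  have "closed S" unfolding S_def
    by (intro continuous_on_closed_Collect_le \<open>continuous_on {t..T} D\<close> continuous_on_const closed_atLeastAtMost)
  moreover have "T \<in> S" using \<open>t \<le> T\<close> \<open>0 \<le> m\<close> by (simp add: S_def D_def)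
  moreover have "bdd_below S" unfolding S_def by (rule bdd_belowI[of _ t]) auto
  ultimately have "Inf S \<in> S" using closed_contains_Inf by blast
  define \<tau> where "\<tau> = Inf S"
  have "t < \<tau>" "\<tau> \<le> T" "D \<tau> \<le> m"
    using \<open>Inf S \<in> S\<close> \<open>m < D t\<close> unfolding \<tau>_def S_def by (auto simp: order.order_iff_strict)
  have above: "m < D v" if "t \<le> v" "v < \<tau>" for v
    using cInf_lower[OF _ \<open>bdd_below S\<close>, of v] that \<open>\<tau> \<le> T\<close> unfolding \<tau>_def S_def by force
  have "D t \<le> D q" if "q \<in> {t..<\<tau>}" for q
  proof (cases "t = q")
    case False
    then have "t < q" "q \<le> T" using that \<open>\<tau> \<le> T\<close> by auto
    have pos: "0 < f1 v \<and> f2 v < 0" if "v \<in> {t..q}" for v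
      using sign above[of v] that \<open>q \<in> {t..<\<tau>}\<close> \<open>\<tau> \<le> T\<close> by (auto simp: D_def)
    then have "R1 q \<le> R1 t" "R2 t \<le> R2 q"
      using RS_sign_conditions_imp_monotone[OF \<open>t < q\<close> \<open>q \<le> T\<close> R1(2) R2(2) f RS1 RS2] by blast+
    then show ?thesis by (simp add: D_def)
  qed simp
  then have "{t..<\<tau>} \<subseteq> {q \<in> {t..T}. D t \<le> D q}" using \<open>\<tau> \<le> T\<close> by auto
  moreover have "closed {q \<in> {t..T}. D t \<le> D q}"
    by (intro continuous_on_closed_Collect_le \<open>continuous_on {t..T} D\<close> continuous_on_const closed_atLeastAtMost)
  ultimately have "closure {t..<\<tau>} \<subseteq> {q \<in> {t..T}. D t \<le> D q}" by (rule closure_minimal)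
  then have "D t \<le> D \<tau>" using \<open>t < \<tau>\<close> by (simp add: subset_iff)
  then show False using \<open>m < D t\<close> \<open>D \<tau> \<le> m\<close> by simp
qed

section \<open>Sublinear expectations\<close>

context
  fixes HH :: "('w \<Rightarrow> real) set" and E :: "('w \<Rightarrow> real) \<Rightarrow> real"
  assumes SE: "sublinear_expectation HH E"
begin

lemma
  shows space_const: "(\<lambda>_. c) \<in> HH"
    and space_add: "X \<in> HH \<Longrightarrow> Y \<in> HH \<Longrightarrow> (\<lambda>w. X w + Y w) \<in> HH"
    and space_scale: "X \<in> HH \<Longrightarrow> (\<lambda>w. a * X w) \<in> HH"
    and space_abs: "X \<in> HH \<Longrightarrow> (\<lambda>w. \<bar>X w\<bar>) \<in> HH"
    and sublinear_mono: "X \<in> HH \<Longrightarrow> Y \<in> HH \<Longrightarrow> (\<And>w. X w \<le> Y w) \<Longrightarrow> E X \<le> E Y"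
    and sublinear_const: "E (\<lambda>_. c) = c"
    and sublinear_subadditive: "X \<in> HH \<Longrightarrow> Y \<in> HH \<Longrightarrow> E (\<lambda>w. X w + Y w) \<le> E X + E Y"
    and sublinear_pos_homogeneous: "X \<in> HH \<Longrightarrow> 0 \<le> a \<Longrightarrow> E (\<lambda>w. a * X w) = a * E X"
  using SE unfolding sublinear_expectation_def by blast+

lemma space_add_const: "X \<in> HH \<Longrightarrow> (\<lambda>w. X w + c) \<in> HH"
  using space_add[OF _ space_const] .

lemma space_diff: "X \<in> HH \<Longrightarrow> Y \<in> HH \<Longrightarrow> (\<lambda>w. X w - Y w) \<in> HH"
  using space_add[OF _ space_scale[of Y "-1"]] by simp

lemma space_abs_diff: "X \<in> HH \<Longrightarrow> Y \<in> HH \<Longrightarrow> (\<lambda>w. \<bar>X w - Y w\<bar>) \<in> HH"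
  by (intro space_abs space_diff)

lemma sublinear_add_const:
  assumes "X \<in> HH"
  shows "E (\<lambda>w. X w + c) = E X + c"
proof -
  have "E (\<lambda>w. X w + c) \<le> E X + c"
    using sublinear_subadditive[OF assms space_const] by (simp add: sublinear_const)
  moreover have "E (\<lambda>w. (X w + c) + - c) \<le> E (\<lambda>w. X w + c) + - c"
    using sublinear_subadditive[OF space_add_const[OF assms, of c] space_const[of "- c"]]
    by (simp add: sublinear_const)
  ultimately show ?thesis by simp
qed

lemma sublinear_abs_diff_le:
  assumes "X \<in> HH" "Y \<in> HH"
  shows "\<bar>E X - E Y\<bar> \<le> E (\<lambda>w. \<bar>X w - Y w\<bar>)"
proof -
  have "E X - E Y \<le> E (\<lambda>w. \<bar>X w - Y w\<bar>)" if "X \<in> HH" "Y \<in> HH" for X Y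
  proof -
    have "E (\<lambda>w. (X w - Y w) + Y w) \<le> E (\<lambda>w. X w - Y w) + E Y"
      by (intro sublinear_subadditive space_diff that)
    moreover have "E (\<lambda>w. X w - Y w) \<le> E (\<lambda>w. \<bar>X w - Y w\<bar>)"
      by (intro sublinear_mono space_diff space_abs_diff that) simp
    ultimately show ?thesis by simp
  qed
  from this[OF assms] this[OF assms(2,1)] show ?thesis
    by (simp add: abs_minus_commute abs_le_iff)
qed

lemma sublinear_diff_le_pointwise:
  assumes "X \<in> HH" "Y \<in> HH" "Z \<in> HH" "0 \<le> k" and bound: "\<And>w. \<bar>X w - Y w\<bar> \<le> k * Z w + c"
  shows "\<bar>E X - E Y\<bar> \<le> k * E Z + c"
proof -
  have "\<bar>E X - E Y\<bar> \<le> E (\<lambda>w. \<bar>X w - Y w\<bar>)" by (rule sublinear_abs_diff_le[OF assms(1,2)])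
  also have "\<dots> \<le> E (\<lambda>w. k * Z w + c)"
    by (intro sublinear_mono space_abs_diff space_add_const space_scale assms bound)
  also have "\<dots> = k * E Z + c"
    by (simp add: sublinear_add_const space_scale assms sublinear_pos_homogeneous)
  finally show ?thesis .
qed

end

section \<open>The function \<open>Hbar\<close> and its inverse \<open>Linv\<close>\<close>

context
  fixes HH :: "('w \<Rightarrow> real) set" and E :: "('w \<Rightarrow> real) \<Rightarrow> real"
    and T Ch cl cu :: real and l u :: "real \<Rightarrow> real" and h :: "real \<Rightarrow> 'w \<Rightarrow> real \<Rightarrow> real"
  assumes SE: "sublinear_expectation HH E"
    and ST: "standing_assms HH E T Ch cl cu l u h"
begin

lemma standing_cl_pos: "0 < cl"
  using ST unfolding standing_assms_def by blast

lemma standing_mem: "s \<in> {0..T} \<Longrightarrow> X \<in> HH \<Longrightarrow> (\<lambda>w. h s w (X w)) \<in> HH"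
  using ST unfolding standing_assms_def by blast

lemma standing_strict_mono: "s \<in> {0..T} \<Longrightarrow> strict_mono (h s w)"
  using ST unfolding standing_assms_def by blast

lemma standing_bi_lipschitz:
  "s \<in> {0..T} \<Longrightarrow> cl * \<bar>y - y'\<bar> \<le> \<bar>h s w y - h s w y'\<bar> \<and> \<bar>h s w y - h s w y'\<bar> \<le> cu * \<bar>y - y'\<bar>"
  using ST unfolding standing_assms_def by blast

lemma standing_cu_nonneg: "s \<in> {0..T} \<Longrightarrow> 0 \<le> cu"
  using standing_bi_lipschitz[where w = undefined and y = 1 and y' = 0] by (metis abs_ge_zero mult.right_neutral
      diff_zero abs_one order_trans)

lemma Hbar_integrand_mem:
  assumes "s \<in> {0..T}" "X \<in> HH"
  shows "(\<lambda>w. h s w (x + X w - E X)) \<in> HH"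
  using standing_mem[OF assms(1) space_add_const[OF SE assms(2), of "x - E X"]]
  by (simp add: algebra_simps)

lemma Hbar_increment_ge:
  assumes s: "s \<in> {0..T}" and X: "X \<in> HH" and "x \<le> x'"
  shows "Hbar E h s x X + cl * (x' - x) \<le> Hbar E h s x' X"
proof -
  have "h s w (x + X w - E X) + cl * (x' - x) \<le> h s w (x' + X w - E X)" for w
    using standing_bi_lipschitz[OF s, where w = w and y = "x' + X w - E X" and y' = "x + X w - E X"]
      \<open>x \<le> x'\<close>
      strict_mono_less_eq[OF standing_strict_mono[OF s, of w]]
    by simp
  then have "E (\<lambda>w. h s w (x + X w - E X) + cl * (x' - x)) \<le> Hbar E h s x' X"
    unfolding Hbar_def
    by (intro sublinear_mono[OF SE] space_add_const[OF SE] Hbar_integrand_mem s X)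
  then show ?thesis
    unfolding Hbar_def by (simp add: sublinear_add_const[OF SE Hbar_integrand_mem[OF s X]])
qed

lemma Hbar_strict_mono:
  "s \<in> {0..T} \<Longrightarrow> X \<in> HH \<Longrightarrow> strict_mono (\<lambda>x. Hbar E h s x X)"
  using Hbar_increment_ge standing_cl_pos
  by (intro strict_monoI) (smt (verit, best) mult_pos_pos)

lemma Hbar_diff_ge:
  "s \<in> {0..T} \<Longrightarrow> X \<in> HH \<Longrightarrow> cl * \<bar>x - x'\<bar> \<le> \<bar>Hbar E h s x X - Hbar E h s x' X\<bar>"
  using Hbar_increment_ge[of s X x x'] Hbar_increment_ge[of s X x' x]
  by (cases "x \<le> x'") (auto simp: abs_if)

lemma Hbar_lipschitz:
  assumes s: "s \<in> {0..T}" and X: "X \<in> HH"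
  shows "\<bar>Hbar E h s x X - Hbar E h s x' X\<bar> \<le> cu * \<bar>x - x'\<bar>"
proof -
  have "\<bar>Hbar E h s x X - Hbar E h s x' X\<bar> \<le> 0 * E (\<lambda>_. 0) + cu * \<bar>x - x'\<bar>"
    unfolding Hbar_def
    by (rule sublinear_diff_le_pointwise[OF SE Hbar_integrand_mem[OF s X] Hbar_integrand_mem[OF s X]
          space_const[OF SE]])
      (use standing_bi_lipschitz[OF s, where y = "x + X w - E X" and y' = "x' + X w - E X" for w] in auto)
  then show ?thesis by simp
qed

lemma Hbar_surj:
  assumes s: "s \<in> {0..T}" and X: "X \<in> HH"
  obtains x where "Hbar E h s x X = y"
proof -
  define r where "r = \<bar>y - Hbar E h s 0 X\<bar> / cl"
  have "0 \<le> r" and clr: "cl * r = \<bar>y - Hbar E h s 0 X\<bar>"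
    using standing_cl_pos by (auto simp: r_def)
  have "Hbar E h s (- r) X \<le> y" "y \<le> Hbar E h s r X"
    using Hbar_increment_ge[OF s X, of "- r" 0] Hbar_increment_ge[OF s X, of 0 r] \<open>0 \<le> r\<close> clr
    by auto
  moreover have "cu-lipschitz_on {- r..r} (\<lambda>x. Hbar E h s x X)"
    by (rule lipschitz_onI)
      (simp_all add: dist_real_def Hbar_lipschitz[OF s X] standing_cu_nonneg[OF s])
  then have "continuous_on {- r..r} (\<lambda>x. Hbar E h s x X)"
    by (rule lipschitz_on_continuous_on)
  ultimately show ?thesis using IVT'[of "\<lambda>x. Hbar E h s x X"] \<open>0 \<le> r\<close> that by force
qed

lemma Hbar_Linv:
  assumes s: "s \<in> {0..T}" and X: "X \<in> HH"
  shows "Hbar E h s (Linv E h b s X) X = b s"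
proof -
  obtain x where "Hbar E h s x X = b s" using Hbar_surj[OF s X] .
  then have "\<exists>!x. Hbar E h s x X = b s"
    using strict_mono_eq[OF Hbar_strict_mono[OF s X]] by metis
  then show ?thesis unfolding Linv_def by (rule theI')
qed

lemma Linv_le_iff:
  "s \<in> {0..T} \<Longrightarrow> X \<in> HH \<Longrightarrow> Linv E h b s X \<le> x \<longleftrightarrow> b s \<le> Hbar E h s x X"
  using strict_mono_less_eq[OF Hbar_strict_mono] Hbar_Linv by metis

lemma Linv_less_iff:
  "s \<in> {0..T} \<Longrightarrow> X \<in> HH \<Longrightarrow> Linv E h b s X < x \<longleftrightarrow> b s < Hbar E h s x X"
  using strict_mono_less[OF Hbar_strict_mono] Hbar_Linv by metis

lemma Hbar_diff_le_expectation_diff: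
  assumes s: "s \<in> {0..T}" and X: "X \<in> HH" and X': "X' \<in> HH"
  shows "\<bar>Hbar E h s x X - Hbar E h s x X'\<bar> \<le> 2 * cu * E (\<lambda>w. \<bar>X w - X' w\<bar>)"
proof -
  have pointwise: "\<bar>h s w (x + X w - E X) - h s w (x + X' w - E X')\<bar>
      \<le> cu * \<bar>X w - X' w\<bar> + cu * \<bar>E X - E X'\<bar>" for w
  proof -
    have "\<bar>h s w (x + X w - E X) - h s w (x + X' w - E X')\<bar> \<le> cu * \<bar>(X w - X' w) - (E X - E X')\<bar>"
      using standing_bi_lipschitz[OF s, where w = w and y = "x + X w - E X" and y' = "x + X' w - E X'"]
      by (simp add: algebra_simps)
    also have "\<dots> \<le> cu * (\<bar>X w - X' w\<bar> + \<bar>E X - E X'\<bar>)"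
      by (intro mult_left_mono standing_cu_nonneg[OF s]) linarith
    finally show ?thesis by (simp add: algebra_simps)
  qed
  have "\<bar>Hbar E h s x X - Hbar E h s x X'\<bar> \<le> cu * E (\<lambda>w. \<bar>X w - X' w\<bar>) + cu * \<bar>E X - E X'\<bar>"
    unfolding Hbar_def
    by (rule sublinear_diff_le_pointwise[OF SE Hbar_integrand_mem[OF s X] Hbar_integrand_mem[OF s X']
          space_abs_diff[OF SE X X'] standing_cu_nonneg[OF s] pointwise])
  also have "cu * \<bar>E X - E X'\<bar> \<le> cu * E (\<lambda>w. \<bar>X w - X' w\<bar>)"
    by (intro mult_left_mono sublinear_abs_diff_le[OF SE X X'] standing_cu_nonneg[OF s])
  finally show ?thesis by simp
qed

lemma Linv_lipschitz:
  assumes s: "s \<in> {0..T}" and X: "X \<in> HH" and X': "X' \<in> HH"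
  shows "\<bar>Linv E h b s X - Linv E h b s X'\<bar> \<le> 2 * cu / cl * E (\<lambda>w. \<bar>X w - X' w\<bar>)"
proof -
  let ?z = "Linv E h b s X" and ?z' = "Linv E h b s X'"
  have "cl * \<bar>?z - ?z'\<bar> \<le> \<bar>Hbar E h s ?z X - Hbar E h s ?z' X\<bar>"
    by (rule Hbar_diff_ge[OF s X])
  also have "\<dots> = \<bar>Hbar E h s ?z' X' - Hbar E h s ?z' X\<bar>"
    using Hbar_Linv[OF s X, of b] Hbar_Linv[OF s X', of b] by simp
  also have "\<dots> \<le> 2 * cu * E (\<lambda>w. \<bar>X w - X' w\<bar>)"
    using Hbar_diff_le_expectation_diff[OF s X' X, of ?z'] by (simp add: abs_minus_commute)
  finally show ?thesis using standing_cl_pos by (simp add: field_simps)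
qed

lemma standing_uniformly_continuous:
  "0 < e \<Longrightarrow> \<exists>\<delta>>0. \<forall>w. \<forall>s\<in>{0..T}. \<forall>s'\<in>{0..T}. \<forall>y y'.
      \<bar>s - s'\<bar> < \<delta> \<and> \<bar>y - y'\<bar> < \<delta> \<longrightarrow> \<bar>h s w y - h s' w y'\<bar> < e"
  using ST unfolding standing_assms_def by blast

lemma continuous_on_expectation_h:
  assumes Y: "C1G HH E T Y"
  shows "continuous_on {0..T} (\<lambda>v. E (\<lambda>w. h v w (Y v w)))"
  unfolding continuous_on_iff
proof (intro ballI allI impI)
  fix v e :: real assume v: "v \<in> {0..T}" and "0 < e"
  have Y_mem: "Y v \<in> HH" if "v \<in> {0..T}" for v using Y that unfolding C1G_def by blast
  have "0 \<le> cu" by (rule standing_cu_nonneg[OF v])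
  obtain d1 where "0 < d1" and d1: "\<forall>w. \<forall>s\<in>{0..T}. \<forall>s'\<in>{0..T}. \<forall>y y'.
      \<bar>s - s'\<bar> < d1 \<and> \<bar>y - y'\<bar> < d1 \<longrightarrow> \<bar>h s w y - h s' w y'\<bar> < e / 2"
    using standing_uniformly_continuous[of "e / 2"] \<open>0 < e\<close> by auto
  have "0 < e / (2 * (cu + 1))" using \<open>0 < e\<close> \<open>0 \<le> cu\<close> by simp
  then obtain d2 where "0 < d2" and d2: "\<forall>v'\<in>{0..T}. \<bar>v' - v\<bar> < d2 \<longrightarrow>
      E (\<lambda>w. \<bar>Y v' w - Y v w\<bar>) < e / (2 * (cu + 1))"
    using Y v unfolding C1G_def by blast
  have "dist (E (\<lambda>w. h v' w (Y v' w))) (E (\<lambda>w. h v w (Y v w))) < e"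
    if v': "v' \<in> {0..T}" and "dist v' v < min d1 d2" for v'
  proof -
    have "\<bar>h v' w (Y v' w) - h v w (Y v w)\<bar> \<le> cu * \<bar>Y v' w - Y v w\<bar> + e / 2" for w
    proof -
      have "\<bar>h v' w (Y v' w) - h v w (Y v' w)\<bar> < e / 2"
        using d1 v v' \<open>dist v' v < min d1 d2\<close> \<open>0 < d1\<close> by (simp add: dist_real_def)
      moreover have "\<bar>h v w (Y v' w) - h v w (Y v w)\<bar> \<le> cu * \<bar>Y v' w - Y v w\<bar>"
        using standing_bi_lipschitz[OF v] by blast
      ultimately show ?thesis by linarith
    qed
    then have "\<bar>E (\<lambda>w. h v' w (Y v' w)) - E (\<lambda>w. h v w (Y v w))\<bar>
        \<le> cu * E (\<lambda>w. \<bar>Y v' w - Y v w\<bar>) + e / 2"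
      by (intro sublinear_diff_le_pointwise[OF SE] standing_mem space_abs_diff[OF SE] Y_mem v v'
          \<open>0 \<le> cu\<close>)
    also have "cu * E (\<lambda>w. \<bar>Y v' w - Y v w\<bar>) \<le> cu * (e / (2 * (cu + 1)))"
      using d2[rule_format, OF v'] \<open>dist v' v < min d1 d2\<close> \<open>0 \<le> cu\<close>
      by (intro mult_left_mono) (simp_all add: dist_real_def)
    also have "cu * (e / (2 * (cu + 1))) < e / 2"
      using \<open>0 \<le> cu\<close> \<open>0 < e\<close> by (simp add: field_simps)
    finally show ?thesis by (simp add: dist_real_def)
  qed
  then show "\<exists>d>0. \<forall>v'\<in>{0..T}. dist v' v < d \<longrightarrow>
      dist (E (\<lambda>w. h v' w (Y v' w))) (E (\<lambda>w. h v w (Y v w))) < e"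
    using \<open>0 < d1\<close> \<open>0 < d2\<close> by (intro exI[of _ "min d1 d2"]) auto
qed

end

lemma Linv_diff_le_Hbar_diff:
  assumes SE: "sublinear_expectation HH E"
    and ST1: "standing_assms HH E T Ch cl cu l1 u1 h1"
    and ST2: "standing_assms HH E T Ch cl cu l2 u2 h2"
    and s: "s \<in> {0..T}" and X: "X \<in> HH"
  shows "\<bar>Linv E h1 b1 s X - Linv E h2 b2 s X\<bar> \<le>
    1 / cl * (\<bar>Hbar E h1 s (Linv E h1 b1 s X) X - Hbar E h2 s (Linv E h1 b1 s X) X\<bar> + \<bar>b1 s - b2 s\<bar>)"
proof -
  let ?z1 = "Linv E h1 b1 s X" and ?z2 = "Linv E h2 b2 s X"
  have "cl * \<bar>?z1 - ?z2\<bar> \<le> \<bar>Hbar E h2 s ?z1 X - Hbar E h2 s ?z2 X\<bar>"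
    by (rule Hbar_diff_ge[OF SE ST2 s X])
  also have "\<dots> = \<bar>Hbar E h2 s ?z1 X - Hbar E h1 s ?z1 X + (b1 s - b2 s)\<bar>"
    using Hbar_Linv[OF SE ST1 s X, of b1] Hbar_Linv[OF SE ST2 s X, of b2] by simp
  also have "\<dots> \<le> \<bar>Hbar E h1 s ?z1 X - Hbar E h2 s ?z1 X\<bar> + \<bar>b1 s - b2 s\<bar>"
    by linarith
  finally show ?thesis using standing_cl_pos[OF SE ST1] by (simp add: field_simps)
qed

definition centered_Linv ::
  "(('w \<Rightarrow> real) \<Rightarrow> real) \<Rightarrow> (real \<Rightarrow> 'w \<Rightarrow> real \<Rightarrow> real) \<Rightarrow> (real \<Rightarrow> real) \<Rightarrow> real \<Rightarrow>
   ('w \<Rightarrow> real) \<Rightarrow> real"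
  where "centered_Linv E h b s X = Linv E h b s X - E X"

lemma centered_Linv_diff_le:
  assumes SE: "sublinear_expectation HH E"
    and ST1: "standing_assms HH E T Ch cl cu l1 u1 h1"
    and ST2: "standing_assms HH E T Ch cl cu l2 u2 h2"
    and s: "s \<in> {0..T}" and X1: "X1 \<in> HH" and X2: "X2 \<in> HH"
  shows "\<bar>centered_Linv E h1 b1 s X1 - centered_Linv E h2 b2 s X2\<bar> \<le>
    \<bar>E X1 - E X2\<bar> + 2 * cu / cl * E (\<lambda>w. \<bar>X1 w - X2 w\<bar>)
    + 1 / cl * (\<bar>Hbar E h1 s (Linv E h1 b1 s X2) X2 - Hbar E h2 s (Linv E h1 b1 s X2) X2\<bar> + \<bar>b1 s - b2 s\<bar>)"
  using Linv_lipschitz[OF SE ST1 s X1 X2, of b1] Linv_diff_le_Hbar_diff[OF SE ST1 ST2 s X2, of b1 b2]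
  unfolding centered_Linv_def by linarith

section \<open>Comparison of two backward Skorokhod problems\<close>

lemma BSP_solution_expectation_eq_Hbar:
  assumes "BSP_solution HH E T Ybar h l u Y R" "v \<in> {0..T}"
  shows "E (\<lambda>w. h v w (Y v w)) = Hbar E h v (E (Ybar v) + (R T - R v)) (Ybar v)"
proof -
  have "Y v = (\<lambda>w. Ybar v w + R T - R v)" using assms unfolding BSP_solution_def by auto
  then show ?thesis by (simp add: Hbar_def algebra_simps)
qed

lemma BSP_solution_tail_regularity:
  assumes SE: "sublinear_expectation HH E"
    and ST: "standing_assms HH E T Ch cl cu l u h"
    and BSP: "BSP_solution HH E T Ybar h l u Y R" and "0 \<le> t"
  shows "continuous_on {t..T} R" "bounded_variation_on t T R"
    and "continuous_on {t..T} (\<lambda>v. E (\<lambda>w. h v w (Y v w)) - l v)"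
    and "continuous_on {t..T} (\<lambda>v. E (\<lambda>w. h v w (Y v w)) - u v)"
    and "\<forall>s s'. t \<le> s \<and> s < s' \<and> s' \<le> T \<longrightarrow>
          (\<exists>I. has_RS_integral (\<lambda>v. E (\<lambda>w. h v w (Y v w)) - l v) R s s' I \<and> I \<le> 0)"
    and "\<forall>s s'. t \<le> s \<and> s < s' \<and> s' \<le> T \<longrightarrow>
          (\<exists>I. has_RS_integral (\<lambda>v. E (\<lambda>w. h v w (Y v w)) - u v) R s s' I \<and> I \<le> 0)"
proof -
  have sub: "{t..T} \<subseteq> {0..T}" using \<open>0 \<le> t\<close> by auto
  have "continuous_on {0..T} (\<lambda>v. E (\<lambda>w. h v w (Y v w)))"
    using continuous_on_expectation_h[OF SE ST] BSP unfolding BSP_solution_def by blast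
  moreover have "continuous_on {0..T} l" "continuous_on {0..T} u"
    using ST unfolding standing_assms_def by blast+
  ultimately show "continuous_on {t..T} (\<lambda>v. E (\<lambda>w. h v w (Y v w)) - l v)"
    "continuous_on {t..T} (\<lambda>v. E (\<lambda>w. h v w (Y v w)) - u v)"
    by (auto intro!: continuous_intros intro: continuous_on_subset[OF _ sub])
  show "continuous_on {t..T} R" "bounded_variation_on t T R"
    using BSP continuous_on_subset[OF _ sub] bounded_variation_on_subinterval[OF _ \<open>0 \<le> t\<close>]
    unfolding BSP_solution_def CTB_def by blast+
  show "\<forall>s s'. t \<le> s \<and> s < s' \<and> s' \<le> T \<longrightarrow>
          (\<exists>I. has_RS_integral (\<lambda>v. E (\<lambda>w. h v w (Y v w)) - l v) R s s' I \<and> I \<le> 0)"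
    "\<forall>s s'. t \<le> s \<and> s < s' \<and> s' \<le> T \<longrightarrow>
          (\<exists>I. has_RS_integral (\<lambda>v. E (\<lambda>w. h v w (Y v w)) - u v) R s s' I \<and> I \<le> 0)"
    using BSP \<open>0 \<le> t\<close> unfolding BSP_solution_def by auto
qed

lemma BSP_tail_increment_diff_le:
  assumes SE: "sublinear_expectation HH E"
    and ST1: "standing_assms HH E T Ch cl cu l1 u1 h1"
    and ST2: "standing_assms HH E T Ch cl cu l2 u2 h2"
    and Ybar: "C1G HH E T Ybar1" "C1G HH E T Ybar2"
    and BSP1: "BSP_solution HH E T Ybar1 h1 l1 u1 Y1 R1"
    and BSP2: "BSP_solution HH E T Ybar2 h2 l2 u2 Y2 R2"
    and t: "t \<in> {0..T}"
    and gap: "\<And>v b1 b2. v \<in> {t..T} \<Longrightarrow> (b1, b2) \<in> {(l1, l2), (u1, u2)} \<Longrightarrow>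
      \<bar>centered_Linv E h1 b1 v (Ybar1 v) - centered_Linv E h2 b2 v (Ybar2 v)\<bar> \<le> m"
  shows "(R1 T - R1 t) - (R2 T - R2 t) \<le> m"
proof -
  have "0 \<le> t" "t \<le> T" using t by auto
  have "0 \<le> m" using gap[of t l1 l2] \<open>t \<le> T\<close> by (meson abs_ge_zero atLeastAtMost_iff insertI1 order_refl order_trans)
  note reg1 = BSP_solution_tail_regularity[OF SE ST1 BSP1 \<open>0 \<le> t\<close>]
  note reg2 = BSP_solution_tail_regularity[OF SE ST2 BSP2 \<open>0 \<le> t\<close>]
  show ?thesis
  proof (rule tail_increment_diff_le[OF \<open>t \<le> T\<close> \<open>0 \<le> m\<close> reg1(1,2) reg2(1,2) reg1(3) reg2(4)
        reg1(5) reg2(6)], intro ballI impI)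
    fix v assume "v \<in> {t..T}" and K: "m < (R1 T - R1 v) - (R2 T - R2 v)"
    then have v: "v \<in> {0..T}" using \<open>0 \<le> t\<close> by auto
    have X: "Ybar1 v \<in> HH" "Ybar2 v \<in> HH" using Ybar v unfolding C1G_def by blast+
    define x1 where "x1 = E (Ybar1 v) + (R1 T - R1 v)"
    define x2 where "x2 = E (Ybar2 v) + (R2 T - R2 v)"
    have g: "E (\<lambda>w. h1 v w (Y1 v w)) = Hbar E h1 v x1 (Ybar1 v)"
      "E (\<lambda>w. h2 v w (Y2 v w)) = Hbar E h2 v x2 (Ybar2 v)"
      unfolding x1_def x2_def
      by (rule BSP_solution_expectation_eq_Hbar[OF BSP1 v], rule BSP_solution_expectation_eq_Hbar[OF BSP2 v])
    have "l2 v \<le> Hbar E h2 v x2 (Ybar2 v)" "Hbar E h1 v x1 (Ybar1 v) \<le> u1 v"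
      using BSP1 BSP2 v unfolding g[symmetric] BSP_solution_def by blast+
    then have "Linv E h2 l2 v (Ybar2 v) \<le> x2" "x1 \<le> Linv E h1 u1 v (Ybar1 v)"
      using Linv_le_iff[OF SE ST2 v X(2)] Linv_less_iff[OF SE ST1 v X(1), of u1 x1] by auto
    moreover have "centered_Linv E h1 l1 v (Ybar1 v) - centered_Linv E h2 l2 v (Ybar2 v) \<le> m"
      "centered_Linv E h1 u1 v (Ybar1 v) - centered_Linv E h2 u2 v (Ybar2 v) \<le> m"
      using gap[OF \<open>v \<in> {t..T}\<close>, of l1 l2] gap[OF \<open>v \<in> {t..T}\<close>, of u1 u2] by (auto simp: abs_le_iff)
    ultimately have "Linv E h1 l1 v (Ybar1 v) < x1" "x2 < Linv E h2 u2 v (Ybar2 v)"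
      using K unfolding x1_def x2_def centered_Linv_def by linarith+
    then show "0 < E (\<lambda>w. h1 v w (Y1 v w)) - l1 v \<and> E (\<lambda>w. h2 v w (Y2 v w)) - u2 v < 0"
      using Linv_less_iff[OF SE ST1 v X(1)] Linv_le_iff[OF SE ST2 v X(2), of u2 x2] g by auto
  qed
qed

lemma BSP_tail_increment_abs_diff_le:
  assumes SE: "sublinear_expectation HH E"
    and ST1: "standing_assms HH E T Ch cl cu l1 u1 h1"
    and ST2: "standing_assms HH E T Ch cl cu l2 u2 h2"
    and Ybar: "C1G HH E T Ybar1" "C1G HH E T Ybar2"
    and BSP1: "BSP_solution HH E T Ybar1 h1 l1 u1 Y1 R1"
    and BSP2: "BSP_solution HH E T Ybar2 h2 l2 u2 Y2 R2"
    and t: "t \<in> {0..T}"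
    and gap: "\<And>v b1 b2. v \<in> {t..T} \<Longrightarrow> (b1, b2) \<in> {(l1, l2), (u1, u2)} \<Longrightarrow>
      \<bar>centered_Linv E h1 b1 v (Ybar1 v) - centered_Linv E h2 b2 v (Ybar2 v)\<bar> \<le> m"
  shows "\<bar>(R1 T - R1 t) - (R2 T - R2 t)\<bar> \<le> m"
proof -
  have "\<bar>centered_Linv E h2 b2 v (Ybar2 v) - centered_Linv E h1 b1 v (Ybar1 v)\<bar> \<le> m"
    if "v \<in> {t..T}" "(b2, b1) \<in> {(l2, l1), (u2, u1)}" for v b1 b2
    using gap[of v b1 b2] that by (auto simp: abs_minus_commute)
  from BSP_tail_increment_diff_le[OF SE ST2 ST1 Ybar(2,1) BSP2 BSP1 t this]
  show ?thesis using BSP_tail_increment_diff_le[OF SE ST1 ST2 Ybar BSP1 BSP2 t gap] by linarith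
qed

lemma ereal_le_SUP_combination:
  fixes a b c d :: "'a \<Rightarrow> real"
  assumes "s \<in> S" "0 \<le> k1" "0 \<le> k2" "x \<le> a s + k1 * b s + k2 * (c s + d s)"
  shows "ereal x \<le> (SUP s\<in>S. ereal (a s)) + ereal k1 * (SUP s\<in>S. ereal (b s))
    + ereal k2 * ((SUP s\<in>S. ereal (c s)) + (SUP s\<in>S. ereal (d s)))"
proof -
  have "ereal x \<le> ereal (a s) + ereal k1 * ereal (b s) + ereal k2 * (ereal (c s) + ereal (d s))"
    using assms(4) by simp
  also have "\<dots> \<le> (SUP s\<in>S. ereal (a s)) + ereal k1 * (SUP s\<in>S. ereal (b s))
    + ereal k2 * ((SUP s\<in>S. ereal (c s)) + (SUP s\<in>S. ereal (d s)))"
    using assms(1-3) by (intro add_mono ereal_mult_left_mono SUP_upper) auto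
  finally show ?thesis .
qed

lemma centered_Linv_gap_le_SUP:
  assumes SE: "sublinear_expectation HH E"
    and ST1: "standing_assms HH E T Ch cl cu l1 u1 h1"
    and ST2: "standing_assms HH E T Ch cl cu l2 u2 h2"
    and Ybar: "C1G HH E T Ybar1" "C1G HH E T Ybar2"
    and "0 \<le> t" and s: "s \<in> {t..T}" and b: "(b1, b2) \<in> {(l1, l2), (u1, u2)}"
  shows "ereal \<bar>centered_Linv E h1 b1 s (Ybar1 s) - centered_Linv E h2 b2 s (Ybar2 s)\<bar> \<le>
      (SUP s\<in>{t..T}. ereal \<bar>E (Ybar1 s) - E (Ybar2 s)\<bar>)
    + ereal (2 * cu / cl) * (SUP s\<in>{t..T}. ereal (E (\<lambda>w. \<bar>Ybar1 s w - Ybar2 s w\<bar>)))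
    + ereal (1 / cl) *
        ((SUP s\<in>{t..T}. ereal (max
            \<bar>Hbar E h1 s (Linv E h1 l1 s (Ybar2 s)) (Ybar2 s) - Hbar E h2 s (Linv E h1 l1 s (Ybar2 s)) (Ybar2 s)\<bar>
            \<bar>Hbar E h1 s (Linv E h1 u1 s (Ybar2 s)) (Ybar2 s) - Hbar E h2 s (Linv E h1 u1 s (Ybar2 s)) (Ybar2 s)\<bar>))
       + (SUP s\<in>{t..T}. ereal (max \<bar>l1 s - l2 s\<bar> \<bar>u1 s - u2 s\<bar>)))"
proof -
  have s0: "s \<in> {0..T}" and X: "Ybar1 s \<in> HH" "Ybar2 s \<in> HH"
    using s \<open>0 \<le> t\<close> Ybar unfolding C1G_def by auto
  have "0 < cl" "0 \<le> cu" using standing_cl_pos[OF SE ST1] standing_cu_nonneg[OF SE ST1 s0] .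
  have "1 / cl * (\<bar>Hbar E h1 s (Linv E h1 b1 s (Ybar2 s)) (Ybar2 s)
                  - Hbar E h2 s (Linv E h1 b1 s (Ybar2 s)) (Ybar2 s)\<bar> + \<bar>b1 s - b2 s\<bar>)
    \<le> 1 / cl * (max
          \<bar>Hbar E h1 s (Linv E h1 l1 s (Ybar2 s)) (Ybar2 s) - Hbar E h2 s (Linv E h1 l1 s (Ybar2 s)) (Ybar2 s)\<bar>
          \<bar>Hbar E h1 s (Linv E h1 u1 s (Ybar2 s)) (Ybar2 s) - Hbar E h2 s (Linv E h1 u1 s (Ybar2 s)) (Ybar2 s)\<bar>
        + max \<bar>l1 s - l2 s\<bar> \<bar>u1 s - u2 s\<bar>)"
    using b \<open>0 < cl\<close> by (intro mult_left_mono add_mono) auto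
  then show ?thesis
    using centered_Linv_diff_le[OF SE ST1 ST2 s0 X, of b1 b2] \<open>0 < cl\<close> \<open>0 \<le> cu\<close>
    by (intro ereal_le_SUP_combination[OF s]) simp_all
qed

theorem proposition3p10:
  fixes HH :: "('w \<Rightarrow> real) set" and E :: "('w \<Rightarrow> real) \<Rightarrow> real"
    and T Ch cl cu :: real
    and l1 u1 l2 u2 R1 R2 :: "real \<Rightarrow> real"
    and h1 h2 :: "real \<Rightarrow> 'w \<Rightarrow> real \<Rightarrow> real"
    and Ybar1 Ybar2 Y1 Y2 :: "real \<Rightarrow> 'w \<Rightarrow> real"
    and t :: real
  assumes "sublinear_expectation HH E"
    and "0 < T"
    and "standing_assms HH E T Ch cl cu l1 u1 h1"
    and "standing_assms HH E T Ch cl cu l2 u2 h2"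
    and "C1G HH E T Ybar1" and "C1G HH E T Ybar2"
    and "l1 T \<le> E (\<lambda>w. h1 T w (Ybar1 T w))" and "E (\<lambda>w. h1 T w (Ybar1 T w)) \<le> u1 T"
    and "l2 T \<le> E (\<lambda>w. h2 T w (Ybar2 T w))" and "E (\<lambda>w. h2 T w (Ybar2 T w)) \<le> u2 T"
    and "BSP_solution HH E T Ybar1 h1 l1 u1 Y1 R1"
    and "BSP_solution HH E T Ybar2 h2 l2 u2 Y2 R2"
    and "t \<in> {0..T}"
  shows "ereal \<bar>(R1 T - R1 t) - (R2 T - R2 t)\<bar> \<le>
      (SUP s\<in>{t..T}. ereal \<bar>E (Ybar1 s) - E (Ybar2 s)\<bar>)
    + ereal (2 * cu / cl) * (SUP s\<in>{t..T}. ereal (E (\<lambda>w. \<bar>Ybar1 s w - Ybar2 s w\<bar>)))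
    + ereal (1 / cl) *
        ((SUP s\<in>{t..T}. ereal (max
            \<bar>Hbar E h1 s (Linv E h1 l1 s (Ybar2 s)) (Ybar2 s) - Hbar E h2 s (Linv E h1 l1 s (Ybar2 s)) (Ybar2 s)\<bar>
            \<bar>Hbar E h1 s (Linv E h1 u1 s (Ybar2 s)) (Ybar2 s) - Hbar E h2 s (Linv E h1 u1 s (Ybar2 s)) (Ybar2 s)\<bar>))
       + (SUP s\<in>{t..T}. ereal (max \<bar>l1 s - l2 s\<bar> \<bar>u1 s - u2 s\<bar>)))"
    (is "_ \<le> ?bound")
proof -
  note SE = assms(1) and ST = assms(3,4) and Ybar = assms(5,6) and BSP = assms(11,12)
  have "0 \<le> t" using assms(13) by simp
  note gap = centered_Linv_gap_le_SUP[OF SE ST Ybar \<open>0 \<le> t\<close>]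
  show ?thesis
  proof (rule ereal_le_real)
    fix z assume "?bound \<le> ereal z"
    have "\<bar>centered_Linv E h1 b1 v (Ybar1 v) - centered_Linv E h2 b2 v (Ybar2 v)\<bar> \<le> z"
      if "v \<in> {t..T}" "(b1, b2) \<in> {(l1, l2), (u1, u2)}" for v b1 b2
      using order_trans[OF gap[OF that] \<open>?bound \<le> ereal z\<close>] by simp
    then show "ereal \<bar>(R1 T - R1 t) - (R2 T - R2 t)\<bar> \<le> ereal z"
      using BSP_tail_increment_abs_diff_le[OF SE ST Ybar BSP assms(13)] by simp
  qed
qed

end
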